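(* Let $\nabla$ be an ES basic fusion operator and $\Phi\mapsto\succeq_\Phi$ the unique basic assignment with $[\![B(\nabla(\Phi,E))]\!]=\max([\![B(E)]\!],\succeq_\Phi)$ for all $\Phi,E$. Then: (i) $\nabla$ satisfies (ESF5) iff the assignment satisfies Property 1; (ii) $\nabla$ satisfies (ESF6) iff it satisfies Property 2; (iii) $\nabla$ satisfies (ESF7) iff it satisfies Property 3; (iv) $\nabla$ satisfies (ESF8) iff it satisfies Property 4; (v) $\nabla$ satisfies (ESF8W) iff it satisfies Property 4'.
   Context: Setting: an epistemic space $(\mathcal E,B,\mathcal L_{\mathcal P})$ ($\mathcal E$ nonempty, $B:\mathcal E\to\mathcal L_{\mathcal P}$ with image modulo equivalence exactly the consistent formulas over the finite variable set $\mathcal P$; $\mathcal W_{\mathcal P}$ the valuations, $[\![\phi]\!]$ models of $\phi$); agents form a well-ordered set $\mathcal S$; a society is a nonempty finite $N\subseteq\mathcal S$; an $N$-profile is $\Phi:N\to\mathcal E$ with $E_i=\Phi(i)$ (for $N=\{i\}$ identified with $E_i$); $\Phi\upharpoonright_M$ is restriction to nonempty $M\subseteq N$; a partition $\{N_1,N_2\}$ of $N$ consists of two nonempty disjoint sets with union $N$. An ES combination operator maps (profile, epistemic state) to an epistemic state; an ES basic fusion operator satisfies (ESF1) $B(\nabla(\Phi,E))\vdash B(E)$; (ESF2) equivalent profiles (same length, same entries in increasing order of agents) and equivalent $B(E)\equiv B(E')$ give equivalent $B(\nabla(\cdot,\cdot))$; (ESF3) if $B(E)\equiv B(E')\wedge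 B(E'')$ then $B(\nabla(\Phi,E'))\wedge B(E'')\vdash B(\nabla(\Phi,E))$; (ESF4) under the same hypothesis, if moreover $B(\nabla(\Phi,E'))\wedge B(E'')\nvdash\bot$ then $B(\nabla(\Phi,E))\vdash B(\nabla(\Phi,E'))\wedge B(E'')$. Postulates (for agents $j,k$, society $N$, partition $\{N_1,N_2\}$, $N$-profile $\Phi$, $E\in\mathcal E$): (ESF5) if $E_j\ne E_k$ there is $E'$ with $B(\nabla(E_j,E'))\not\equiv B(\nabla(E_k,E'))$; (ESF6) if $\bigwedge_{i\in N}B(E_i)\wedge B(E)\nvdash\bot$ then $B(\nabla(\Phi,E))\equiv\bigwedge_{i\in N}B(E_i)\wedge B(E)$; (ESF7) $B(\nabla(\Phi\upharpoonright_{N_1},E))\wedge B(\nabla(\Phi\upharpoonright_{N_2},E))\vdash B(\nabla(\Phi,E))$; (ESF8) if $B(\nabla(\Phi\upharpoonright_{N_1},E))\wedge B(\nabla(\Phi\upharpoonright_{N_2},E))\nvdash\bot$ then $B(\nabla(\Phi,E))\vdash B(\nabla(\Phi\upharpoonright_{N_1},E))\wedge B(\nabla(\Phi\upharpoonright_{N_2},E))$; (ESF8W) same hypothesis, conclusion $B(\nabla(\Phi,E))\vdash B(\nabla(\Phi\upharpoonright_{N_1},E))\vee B(\nabla(\Phi\upharpoonright_{N_2},E))$. Properties of an assignment $\Phi\mapsto\succeq_\Phi$ (total preorders on $\mathcal W_{\mathcal P}$, $\succ$ strict part), for all such data and interpretations $w,w'$: (1) if $E_j\ne E_k$ then $\succeq_{E_j}\ne\succeq_{E_k}$;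 (2) if $\bigwedge_{i\in N}B(E_i)\nvdash\bot$ then $[\![\bigwedge_{i\in N}B(E_i)]\!]=\max(\succeq_\Phi)$ (the set of $\succeq_\Phi$-maximal valuations); (3) if $w\succeq_{\Phi\upharpoonright_{N_1}}w'$ and $w\succeq_{\Phi\upharpoonright_{N_2}}w'$ then $w\succeq_\Phi w'$; (4) if $w\succeq_{\Phi\upharpoonright_{N_1}}w'$ and $w\succ_{\Phi\upharpoonright_{N_2}}w'$ then $w\succ_\Phi w'$; (4') if $w\succ_{\Phi\upharpoonright_{N_1}}w'$ and $w\succ_{\Phi\upharpoonright_{N_2}}w'$ then $w\succ_\Phi w'$. $\max(C,\succeq)=\{c\in C: c\succeq x\ \forall x\in C\}$. *)

theory Defs
  imports Main
begin

datatype 'p formula = Var 'p | Top | Bot | Neg "'p formula"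
  | And "'p formula" "'p formula" | Or "'p formula" "'p formula"

type_synonym 'p valuation = "'p \<Rightarrow> bool"

fun eval :: "'p valuation \<Rightarrow> 'p formula \<Rightarrow> bool" where
  "eval w (Var p) = w p"
| "eval w Top = True"
| "eval w Bot = False"
| "eval w (Neg f) = (\<not> eval w f)"
| "eval w (And f g) = (eval w f \<and> eval w g)"
| "eval w (Or f g) = (eval w f \<or> eval w g)"

definition models :: "'p formula \<Rightarrow> 'p valuation set" where
  "models f = {w. eval w f}"

definition entails :: "'p formula \<Rightarrow> 'p formula \<Rightarrow> bool" where
  "entails f g \<longleftrightarrow> models f \<subseteq> models g"

definition fequiv :: "'p formula \<Rightarrow> 'p formula \<Rightarrow> bool" where
  "fequiv f g \<longleftrightarrow> entails f g \<and> entails g f"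

definition consistent :: "'p formula \<Rightarrow> bool" where
  "consistent f \<longleftrightarrow> \<not> entails f Bot"

definition epistemic_space :: "('e \<Rightarrow> 'p formula) \<Rightarrow> bool" where
  "epistemic_space B \<longleftrightarrow> (\<forall>e. consistent (B e)) \<and> (\<forall>f. consistent f \<longrightarrow> (\<exists>e. fequiv (B e) f))"

definition is_profile :: "('a \<rightharpoonup> 'e) \<Rightarrow> bool" where
  "is_profile \<Phi> \<longleftrightarrow> finite (dom \<Phi>) \<and> dom \<Phi> \<noteq> {}"

definition entries :: "('a::linorder \<rightharpoonup> 'e) \<Rightarrow> 'e list" where
  "entries \<Phi> = map (\<lambda>i. the (\<Phi> i)) (sorted_list_of_set (dom \<Phi>))"

definition profile_equiv :: "('a::linorder \<rightharpoonup> 'e) \<Rightarrow> ('a \<rightharpoonup> 'e) \<Rightarrow> bool" where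
  "profile_equiv \<Phi> \<Psi> \<longleftrightarrow> entries \<Phi> = entries \<Psi>"

definition big_and :: "('e \<Rightarrow> 'p formula) \<Rightarrow> ('a::linorder \<rightharpoonup> 'e) \<Rightarrow> 'p formula" where
  "big_and B \<Phi> = foldr And (map B (entries \<Phi>)) Top"

definition is_partition2 :: "'a set \<Rightarrow> 'a set \<Rightarrow> 'a set \<Rightarrow> bool" where
  "is_partition2 N N1 N2 \<longleftrightarrow> N1 \<noteq> {} \<and> N2 \<noteq> {} \<and> N1 \<inter> N2 = {} \<and> N1 \<union> N2 = N"

type_synonym ('a, 'e) combination = "('a \<rightharpoonup> 'e) \<Rightarrow> 'e \<Rightarrow> 'e"

definition ESF1 :: "('e \<Rightarrow> 'p formula) \<Rightarrow> ('a, 'e) combination \<Rightarrow> bool" where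
  "ESF1 B F \<longleftrightarrow> (\<forall>\<Phi> E. is_profile \<Phi> \<longrightarrow> entails (B (F \<Phi> E)) (B E))"

definition ESF2 :: "('e \<Rightarrow> 'p formula) \<Rightarrow> ('a::linorder, 'e) combination \<Rightarrow> bool" where
  "ESF2 B F \<longleftrightarrow> (\<forall>\<Phi> \<Psi> E E'. is_profile \<Phi> \<longrightarrow> is_profile \<Psi> \<longrightarrow> profile_equiv \<Phi> \<Psi>
      \<longrightarrow> fequiv (B E) (B E') \<longrightarrow> fequiv (B (F \<Phi> E)) (B (F \<Psi> E')))"

definition ESF3 :: "('e \<Rightarrow> 'p formula) \<Rightarrow> ('a, 'e) combination \<Rightarrow> bool" where
  "ESF3 B F \<longleftrightarrow> (\<forall>\<Phi> E E' E''. is_profile \<Phi> \<longrightarrow> fequiv (B E) (And (B E') (B E''))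
      \<longrightarrow> entails (And (B (F \<Phi> E')) (B E'')) (B (F \<Phi> E)))"

definition ESF4 :: "('e \<Rightarrow> 'p formula) \<Rightarrow> ('a, 'e) combination \<Rightarrow> bool" where
  "ESF4 B F \<longleftrightarrow> (\<forall>\<Phi> E E' E''. is_profile \<Phi> \<longrightarrow> fequiv (B E) (And (B E') (B E''))
      \<longrightarrow> consistent (And (B (F \<Phi> E')) (B E''))
      \<longrightarrow> entails (B (F \<Phi> E)) (And (B (F \<Phi> E')) (B E'')))"

definition ES_basic_fusion :: "('e \<Rightarrow> 'p formula) \<Rightarrow> ('a::linorder, 'e) combination \<Rightarrow> bool" where
  "ES_basic_fusion B F \<longleftrightarrow> ESF1 B F \<and> ESF2 B F \<and> ESF3 B F \<and> ESF4 B F"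

definition ESF5 :: "('e \<Rightarrow> 'p formula) \<Rightarrow> ('a, 'e) combination \<Rightarrow> bool" where
  "ESF5 B F \<longleftrightarrow> (\<forall>j k Ej Ek. Ej \<noteq> Ek \<longrightarrow>
      (\<exists>E'. \<not> fequiv (B (F [j \<mapsto> Ej] E')) (B (F [k \<mapsto> Ek] E'))))"

definition ESF6 :: "('e \<Rightarrow> 'p formula) \<Rightarrow> ('a::linorder, 'e) combination \<Rightarrow> bool" where
  "ESF6 B F \<longleftrightarrow> (\<forall>\<Phi> E. is_profile \<Phi> \<longrightarrow> consistent (And (big_and B \<Phi>) (B E))
      \<longrightarrow> fequiv (B (F \<Phi> E)) (And (big_and B \<Phi>) (B E)))"

definition ESF7 :: "('e \<Rightarrow> 'p formula) \<Rightarrow> ('a, 'e) combination \<Rightarrow> bool" where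
  "ESF7 B F \<longleftrightarrow> (\<forall>\<Phi> N1 N2 E. is_profile \<Phi> \<longrightarrow> is_partition2 (dom \<Phi>) N1 N2
      \<longrightarrow> entails (And (B (F (\<Phi> |` N1) E)) (B (F (\<Phi> |` N2) E))) (B (F \<Phi> E)))"

definition ESF8 :: "('e \<Rightarrow> 'p formula) \<Rightarrow> ('a, 'e) combination \<Rightarrow> bool" where
  "ESF8 B F \<longleftrightarrow> (\<forall>\<Phi> N1 N2 E. is_profile \<Phi> \<longrightarrow> is_partition2 (dom \<Phi>) N1 N2
      \<longrightarrow> consistent (And (B (F (\<Phi> |` N1) E)) (B (F (\<Phi> |` N2) E)))
      \<longrightarrow> entails (B (F \<Phi> E)) (And (B (F (\<Phi> |` N1) E)) (B (F (\<Phi> |` N2) E))))"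

definition ESF8W :: "('e \<Rightarrow> 'p formula) \<Rightarrow> ('a, 'e) combination \<Rightarrow> bool" where
  "ESF8W B F \<longleftrightarrow> (\<forall>\<Phi> N1 N2 E. is_profile \<Phi> \<longrightarrow> is_partition2 (dom \<Phi>) N1 N2
      \<longrightarrow> consistent (And (B (F (\<Phi> |` N1) E)) (B (F (\<Phi> |` N2) E)))
      \<longrightarrow> entails (B (F \<Phi> E)) (Or (B (F (\<Phi> |` N1) E)) (B (F (\<Phi> |` N2) E))))"

text \<open>An assignment maps each profile to a relation on valuations; R \<Phi> w w' means
  w is at least as plausible as w' for \<Phi>.\<close>
type_synonym ('a, 'e, 'p) assignment = "('a \<rightharpoonup> 'e) \<Rightarrow> 'p valuation \<Rightarrow> 'p valuation \<Rightarrow> bool"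

definition total_preorder :: "('w \<Rightarrow> 'w \<Rightarrow> bool) \<Rightarrow> bool" where
  "total_preorder R \<longleftrightarrow> (\<forall>x y. R x y \<or> R y x) \<and> (\<forall>x y z. R x y \<longrightarrow> R y z \<longrightarrow> R x z)"

definition strict :: "('w \<Rightarrow> 'w \<Rightarrow> bool) \<Rightarrow> 'w \<Rightarrow> 'w \<Rightarrow> bool" where
  "strict R x y \<longleftrightarrow> R x y \<and> \<not> R y x"

definition max_set :: "'w set \<Rightarrow> ('w \<Rightarrow> 'w \<Rightarrow> bool) \<Rightarrow> 'w set" where
  "max_set C R = {c \<in> C. \<forall>x \<in> C. R c x}"

definition Prop1 :: "('a, 'e, 'p) assignment \<Rightarrow> bool" where
  "Prop1 R \<longleftrightarrow> (\<forall>j k Ej Ek. Ej \<noteq> Ek \<longrightarrow> R [j \<mapsto> Ej] \<noteq> R [k \<mapsto> Ek])"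

definition Prop2 :: "('e \<Rightarrow> 'p formula) \<Rightarrow> ('a::linorder, 'e, 'p) assignment \<Rightarrow> bool" where
  "Prop2 B R \<longleftrightarrow> (\<forall>\<Phi>. is_profile \<Phi> \<longrightarrow> consistent (big_and B \<Phi>)
      \<longrightarrow> models (big_and B \<Phi>) = max_set UNIV (R \<Phi>))"

definition Prop3 :: "('a, 'e, 'p) assignment \<Rightarrow> bool" where
  "Prop3 R \<longleftrightarrow> (\<forall>\<Phi> N1 N2 w w'. is_profile \<Phi> \<longrightarrow> is_partition2 (dom \<Phi>) N1 N2
      \<longrightarrow> R (\<Phi> |` N1) w w' \<longrightarrow> R (\<Phi> |` N2) w w' \<longrightarrow> R \<Phi> w w')"

definition Prop4 :: "('a, 'e, 'p) assignment \<Rightarrow> bool" where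
  "Prop4 R \<longleftrightarrow> (\<forall>\<Phi> N1 N2 w w'. is_profile \<Phi> \<longrightarrow> is_partition2 (dom \<Phi>) N1 N2
      \<longrightarrow> R (\<Phi> |` N1) w w' \<longrightarrow> strict (R (\<Phi> |` N2)) w w' \<longrightarrow> strict (R \<Phi>) w w')"

definition Prop4' :: "('a, 'e, 'p) assignment \<Rightarrow> bool" where
  "Prop4' R \<longleftrightarrow> (\<forall>\<Phi> N1 N2 w w'. is_profile \<Phi> \<longrightarrow> is_partition2 (dom \<Phi>) N1 N2
      \<longrightarrow> strict (R (\<Phi> |` N1)) w w' \<longrightarrow> strict (R (\<Phi> |` N2)) w w' \<longrightarrow> strict (R \<Phi>) w w')"

end

theory Submission
  imports Defs
begin

text \<open>Every nonempty set of valuations over finitely many variables is the set of models of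
  some belief base, so under the representation
  \<open>models (B (F \<Phi> E)) = max_set (models (B E)) (R \<Phi>)\<close> each postulate becomes a statement
  about the maxima of \<open>R \<Phi>\<close> on arbitrary sets of valuations. Testing on two-element sets
  \<open>{w, w'}\<close> recovers the pairwise comparisons of a total preorder from its maxima; conversely,
  the pairwise conditions pass to maxima on arbitrary sets because an element that is maximal
  in a set strictly beats every element of that set that is not.\<close>

lemma models_Top [simp]: "models Top = UNIV"
  and models_Bot [simp]: "models Bot = {}"
  and models_Var: "models (Var p) = {w. w p}"
  and models_Neg: "models (Neg f) = - models f"
  and models_And [simp]: "models (And f g) = models f \<inter> models g"
  and models_Or [simp]: "models (Or f g) = models f \<union> models g"
  by (auto simp: models_def)

lemma consistent_iff_models: "consistent f \<longleftrightarrow> models f \<noteq> {}"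
  by (auto simp: consistent_def entails_def)

lemma fequiv_iff_models: "fequiv f g \<longleftrightarrow> models f = models g"
  by (auto simp: fequiv_def entails_def)

lemma ex_formula_models_agree:
  assumes "finite P"
  shows "\<exists>f. models f = {v. \<forall>p\<in>P. v p = w p}"
  using assms
proof (induction P rule: finite_induct)
  case empty
  have "models Top = {v. \<forall>p\<in>{}. v p = w p}" by simp
  then show ?case by blast
next
  case (insert p P)
  then obtain f where f: "models f = {v. \<forall>q\<in>P. v q = w q}" by blast
  have literal: "models (if w p then Var p else Neg (Var p)) = {v. v p = w p}"
    by (auto simp: models_Var models_Neg)
  have "models (And (if w p then Var p else Neg (Var p)) f) = {v. \<forall>q\<in>insert p P. v q = w q}"
    unfolding models_And literal f by blast
  then show ?case by blast
qed

lemma ex_formula_models: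
  fixes S :: "('p::finite) valuation set"
  shows "\<exists>f. models f = S"
proof -
  have singleton: "\<exists>f. models f = {w}" for w :: "'p valuation"
    using ex_formula_models_agree[of UNIV w] by (simp add: fun_eq_iff[symmetric])
  have "finite S" by simp
  then show ?thesis
  proof (induction S rule: finite_induct)
    case empty
    show ?case using models_Bot by blast
  next
    case (insert w S)
    then show ?case using singleton models_Or by (metis insert_is_Un)
  qed
qed

lemma epistemic_space_models_onto:
  fixes B :: "'e \<Rightarrow> ('p::finite) formula"
  assumes "epistemic_space B" and "S \<noteq> {}"
  shows "\<exists>E. models (B E) = S"
proof -
  obtain f where f: "models f = S" using ex_formula_models by blast
  with assms(2) have "consistent f" by (simp add: consistent_iff_models)
  with assms(1) f show ?thesis by (auto simp: epistemic_space_def fequiv_iff_models)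
qed

lemma epistemic_space_all_models_iff:
  fixes B :: "'e \<Rightarrow> ('p::finite) formula"
  assumes "epistemic_space B" and "P {}"
  shows "(\<forall>E. P (models (B E))) \<longleftrightarrow> (\<forall>S. P S)"
  using assms epistemic_space_models_onto by metis

lemma total_preorder_refl: "total_preorder R \<Longrightarrow> R x x"
  by (auto simp: total_preorder_def)

lemma strict_iff_not_converse: "total_preorder R \<Longrightarrow> strict R x y \<longleftrightarrow> \<not> R y x"
  by (auto simp: strict_def total_preorder_def)

lemma max_set_empty [simp]: "max_set {} R = {}"
  by (simp add: max_set_def)

lemma max_set_pair_iff: "total_preorder R \<Longrightarrow> w \<in> max_set {w, w'} R \<longleftrightarrow> R w w'"
  by (auto simp: max_set_def total_preorder_refl)

lemma strict_iff_notin_max_set_pair: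
  "total_preorder R \<Longrightarrow> strict R w w' \<longleftrightarrow> w' \<notin> max_set {w, w'} R"
  by (metis max_set_pair_iff insert_commute strict_iff_not_converse)

lemma strict_if_max_set_notin_max_set:
  assumes "total_preorder R" and "v \<in> max_set S R" and "w \<in> S" and "w \<notin> max_set S R"
  shows "strict R v w"
proof -
  obtain x where "x \<in> S" and "\<not> R w x" using assms(3,4) by (auto simp: max_set_def)
  moreover have "R v x" using assms(2) \<open>x \<in> S\<close> by (simp add: max_set_def)
  ultimately show ?thesis using assms(1) unfolding strict_def total_preorder_def by metis
qed

lemma max_set_eq_Int_max_set_UNIV:
  assumes "total_preorder R" and "max_set UNIV R \<inter> S \<noteq> {}"
  shows "max_set S R = max_set UNIV R \<inter> S"
proof
  obtain v where v: "v \<in> max_set UNIV R" "v \<in> S" using assms(2) by blast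
  show "max_set S R \<subseteq> max_set UNIV R \<inter> S"
  proof
    fix c assume "c \<in> max_set S R"
    then have "c \<in> S" and "R c v" using v(2) by (auto simp: max_set_def)
    with v(1) assms(1) show "c \<in> max_set UNIV R \<inter> S"
      unfolding max_set_def total_preorder_def by blast
  qed
qed (auto simp: max_set_def)

lemma total_preorder_eq_iff_max_set_eq:
  assumes "total_preorder R1" and "total_preorder R2"
  shows "R1 = R2 \<longleftrightarrow> (\<forall>S. max_set S R1 = max_set S R2)"
proof
  assume "\<forall>S. max_set S R1 = max_set S R2"
  then have "R1 w w' \<longleftrightarrow> R2 w w'" for w w'
    using max_set_pair_iff[OF assms(1)] max_set_pair_iff[OF assms(2)] by metis
  then show "R1 = R2" by blast
qed simp

lemma max_set_eq_Int_iff: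
  assumes "total_preorder R"
  shows "(\<forall>S. M \<inter> S \<noteq> {} \<longrightarrow> max_set S R = M \<inter> S) \<longleftrightarrow> (M \<noteq> {} \<longrightarrow> M = max_set UNIV R)"
proof
  assume "\<forall>S. M \<inter> S \<noteq> {} \<longrightarrow> max_set S R = M \<inter> S"
  then show "M \<noteq> {} \<longrightarrow> M = max_set UNIV R" by (metis Int_UNIV_right)
next
  assume "M \<noteq> {} \<longrightarrow> M = max_set UNIV R"
  then show "\<forall>S. M \<inter> S \<noteq> {} \<longrightarrow> max_set S R = M \<inter> S"
    using max_set_eq_Int_max_set_UNIV[OF assms] by auto
qed

lemma weak_pareto_iff_max_set_Int_subset:
  assumes "total_preorder R1" and "total_preorder R2"
  shows "(\<forall>w w'. R1 w w' \<longrightarrow> R2 w w' \<longrightarrow> R w w')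
    \<longleftrightarrow> (\<forall>S. max_set S R1 \<inter> max_set S R2 \<subseteq> max_set S R)"
proof (intro iffI allI impI)
  fix w w'
  assume "\<forall>S. max_set S R1 \<inter> max_set S R2 \<subseteq> max_set S R" and "R1 w w'" and "R2 w w'"
  then have "w \<in> max_set {w, w'} R"
    using max_set_pair_iff[OF assms(1)] max_set_pair_iff[OF assms(2)] by blast
  then show "R w w'" by (simp add: max_set_def)
qed (auto simp: max_set_def)

lemma strict_pareto_iff_max_set_subset_Int:
  assumes "total_preorder R1" and "total_preorder R2" and "total_preorder R"
  shows "((\<forall>w w'. R1 w w' \<longrightarrow> strict R2 w w' \<longrightarrow> strict R w w')
        \<and> (\<forall>w w'. R2 w w' \<longrightarrow> strict R1 w w' \<longrightarrow> strict R w w'))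
    \<longleftrightarrow> (\<forall>S. max_set S R1 \<inter> max_set S R2 \<noteq> {} \<longrightarrow> max_set S R \<subseteq> max_set S R1 \<inter> max_set S R2)"
proof -
  have in_max_set: "w \<in> max_set S Ra"
    if "total_preorder Ra" and pareto: "\<forall>w w'. Rb w w' \<longrightarrow> strict Ra w w' \<longrightarrow> strict R w w'"
      and va: "v \<in> max_set S Ra" and vb: "v \<in> max_set S Rb" and w: "w \<in> max_set S R"
    for Ra Rb S v w
  proof (rule ccontr)
    assume "w \<notin> max_set S Ra"
    moreover have "w \<in> S" and "R w v" using w va by (auto simp: max_set_def)
    ultimately have "strict Ra v w"
      using strict_if_max_set_notin_max_set[OF \<open>total_preorder Ra\<close> va] by blast
    moreover have "Rb v w" using vb \<open>w \<in> S\<close> by (simp add: max_set_def)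
    ultimately have "strict R v w" using pareto by blast
    with \<open>R w v\<close> show False by (simp add: strict_def)
  qed
  have strict_if_max_set_subset: "strict R w w'"
    if "total_preorder Ra" and "total_preorder Rb"
      and max: "\<forall>S. max_set S Ra \<inter> max_set S Rb \<noteq> {} \<longrightarrow> max_set S R \<subseteq> max_set S Rb"
      and "Ra w w'" and "strict Rb w w'"
    for Ra Rb w w'
  proof -
    have "w \<in> max_set {w, w'} Ra" and "w \<in> max_set {w, w'} Rb"
      using that by (simp_all add: max_set_pair_iff strict_def)
    with max have "max_set {w, w'} R \<subseteq> max_set {w, w'} Rb" by blast
    moreover have "w' \<notin> max_set {w, w'} Rb"
      using that(2,5) by (simp add: strict_iff_notin_max_set_pair)
    ultimately have "w' \<notin> max_set {w, w'} R" by blast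
    then show ?thesis by (simp add: strict_iff_notin_max_set_pair[OF assms(3)])
  qed
  show ?thesis
  proof
    assume pareto: "(\<forall>w w'. R1 w w' \<longrightarrow> strict R2 w w' \<longrightarrow> strict R w w')
        \<and> (\<forall>w w'. R2 w w' \<longrightarrow> strict R1 w w' \<longrightarrow> strict R w w')"
    show "\<forall>S. max_set S R1 \<inter> max_set S R2 \<noteq> {} \<longrightarrow> max_set S R \<subseteq> max_set S R1 \<inter> max_set S R2"
    proof (intro allI impI subsetI)
      fix S w
      assume "max_set S R1 \<inter> max_set S R2 \<noteq> {}" and w: "w \<in> max_set S R"
      then obtain v where v1: "v \<in> max_set S R1" and v2: "v \<in> max_set S R2" by blast
      have "w \<in> max_set S R1" using in_max_set[OF assms(1) _ v1 v2 w] pareto by blast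
      moreover have "w \<in> max_set S R2" using in_max_set[OF assms(2) _ v2 v1 w] pareto by blast
      ultimately show "w \<in> max_set S R1 \<inter> max_set S R2" by blast
    qed
  next
    assume max: "\<forall>S. max_set S R1 \<inter> max_set S R2 \<noteq> {} \<longrightarrow> max_set S R \<subseteq> max_set S R1 \<inter> max_set S R2"
    then have max12: "\<forall>S. max_set S R1 \<inter> max_set S R2 \<noteq> {} \<longrightarrow> max_set S R \<subseteq> max_set S R2"
      and max21: "\<forall>S. max_set S R2 \<inter> max_set S R1 \<noteq> {} \<longrightarrow> max_set S R \<subseteq> max_set S R1"
      by blast+
    show "(\<forall>w w'. R1 w w' \<longrightarrow> strict R2 w w' \<longrightarrow> strict R w w')
        \<and> (\<forall>w w'. R2 w w' \<longrightarrow> strict R1 w w' \<longrightarrow> strict R w w')"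
      using strict_if_max_set_subset[OF assms(1,2) max12] strict_if_max_set_subset[OF assms(2,1) max21]
      by blast
  qed
qed

lemma strict_pareto'_iff_max_set_subset_Un:
  assumes "total_preorder R1" and "total_preorder R2" and "total_preorder R"
  shows "(\<forall>w w'. strict R1 w w' \<longrightarrow> strict R2 w w' \<longrightarrow> strict R w w')
    \<longleftrightarrow> (\<forall>S. max_set S R1 \<inter> max_set S R2 \<noteq> {} \<longrightarrow> max_set S R \<subseteq> max_set S R1 \<union> max_set S R2)"
proof (intro iffI allI impI subsetI)
  fix S w
  assume pareto: "\<forall>w w'. strict R1 w w' \<longrightarrow> strict R2 w w' \<longrightarrow> strict R w w'"
    and "max_set S R1 \<inter> max_set S R2 \<noteq> {}" and w: "w \<in> max_set S R"
  then obtain v where v1: "v \<in> max_set S R1" and v2: "v \<in> max_set S R2" by blast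
  have "w \<in> S" and "R w v" using w v1 by (auto simp: max_set_def)
  show "w \<in> max_set S R1 \<union> max_set S R2"
  proof (rule ccontr)
    assume "w \<notin> max_set S R1 \<union> max_set S R2"
    then have "strict R1 v w" and "strict R2 v w"
      using strict_if_max_set_notin_max_set[OF assms(1) v1 \<open>w \<in> S\<close>]
        strict_if_max_set_notin_max_set[OF assms(2) v2 \<open>w \<in> S\<close>] by blast+
    with pareto \<open>R w v\<close> show False by (simp add: strict_def)
  qed
next
  fix w w'
  assume max: "\<forall>S. max_set S R1 \<inter> max_set S R2 \<noteq> {} \<longrightarrow> max_set S R \<subseteq> max_set S R1 \<union> max_set S R2"
    and "strict R1 w w'" and "strict R2 w w'"
  then have "w \<in> max_set {w, w'} R1 \<inter> max_set {w, w'} R2"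
    using assms(1,2) by (simp add: max_set_pair_iff strict_def)
  with max have "max_set {w, w'} R \<subseteq> max_set {w, w'} R1 \<union> max_set {w, w'} R2" by blast
  moreover have "w' \<notin> max_set {w, w'} R1" and "w' \<notin> max_set {w, w'} R2"
    using \<open>strict R1 w w'\<close> \<open>strict R2 w w'\<close> assms(1,2) by (simp_all add: strict_iff_notin_max_set_pair)
  ultimately have "w' \<notin> max_set {w, w'} R" by blast
  then show "strict R w w'" by (simp add: strict_iff_notin_max_set_pair[OF assms(3)])
qed

lemma is_profile_singleton: "is_profile [j \<mapsto> E]"
  by (simp add: is_profile_def)

lemma is_profile_restrict:
  assumes "is_profile \<Phi>" and "is_partition2 (dom \<Phi>) N1 N2"
  shows "is_profile (\<Phi> |` N1)" and "is_profile (\<Phi> |` N2)"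
  using assms by (auto simp: is_profile_def is_partition2_def)

lemma is_partition2_commute: "is_partition2 N N1 N2 \<longleftrightarrow> is_partition2 N N2 N1"
  by (auto simp: is_partition2_def)

locale max_set_representation =
  fixes B :: "'e \<Rightarrow> ('p::finite) formula"
    and F :: "('a::linorder, 'e) combination"
    and R :: "('a, 'e, 'p) assignment"
  assumes epistemic_space: "epistemic_space B"
    and total_preorder_R: "is_profile \<Phi> \<Longrightarrow> total_preorder (R \<Phi>)"
    and models_fusion: "is_profile \<Phi> \<Longrightarrow> models (B (F \<Phi> E)) = max_set (models (B E)) (R \<Phi>)"
begin

lemma ESF5_iff_Prop1: "ESF5 B F \<longleftrightarrow> Prop1 R"
proof -
  have "(\<forall>E. fequiv (B (F [j \<mapsto> Ej] E)) (B (F [k \<mapsto> Ek] E))) \<longleftrightarrow> R [j \<mapsto> Ej] = R [k \<mapsto> Ek]"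
    for j k Ej Ek
  proof -
    have "(\<forall>E. fequiv (B (F [j \<mapsto> Ej] E)) (B (F [k \<mapsto> Ek] E)))
        \<longleftrightarrow> (\<forall>S. max_set S (R [j \<mapsto> Ej]) = max_set S (R [k \<mapsto> Ek]))"
      using epistemic_space_all_models_iff[OF epistemic_space, of "\<lambda>S. max_set S (R [j \<mapsto> Ej]) = max_set S (R [k \<mapsto> Ek])"]
      by (simp add: fequiv_iff_models models_fusion is_profile_singleton)
    also have "\<dots> \<longleftrightarrow> R [j \<mapsto> Ej] = R [k \<mapsto> Ek]"
      by (simp add: total_preorder_eq_iff_max_set_eq total_preorder_R is_profile_singleton)
    finally show ?thesis .
  qed
  then show ?thesis unfolding ESF5_def Prop1_def by blast
qed

lemma ESF6_iff_Prop2: "ESF6 B F \<longleftrightarrow> Prop2 B R"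
proof -
  have "(\<forall>E. consistent (And (big_and B \<Phi>) (B E)) \<longrightarrow> fequiv (B (F \<Phi> E)) (And (big_and B \<Phi>) (B E)))
      \<longleftrightarrow> (consistent (big_and B \<Phi>) \<longrightarrow> models (big_and B \<Phi>) = max_set UNIV (R \<Phi>))"
    if "is_profile \<Phi>" for \<Phi>
  proof -
    let ?M = "models (big_and B \<Phi>)"
    have "(\<forall>E. consistent (And (big_and B \<Phi>) (B E)) \<longrightarrow> fequiv (B (F \<Phi> E)) (And (big_and B \<Phi>) (B E)))
        \<longleftrightarrow> (\<forall>S. ?M \<inter> S \<noteq> {} \<longrightarrow> max_set S (R \<Phi>) = ?M \<inter> S)"
      using epistemic_space_all_models_iff[OF epistemic_space, of "\<lambda>S. ?M \<inter> S \<noteq> {} \<longrightarrow> max_set S (R \<Phi>) = ?M \<inter> S"]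
      by (simp add: consistent_iff_models fequiv_iff_models models_fusion that)
    then show ?thesis
      using max_set_eq_Int_iff[OF total_preorder_R[OF that]] by (simp add: consistent_iff_models)
  qed
  then show ?thesis unfolding ESF6_def Prop2_def by blast
qed

context
  fixes \<Phi> :: "'a \<rightharpoonup> 'e" and N1 N2 :: "'a set"
  assumes profile: "is_profile \<Phi>" and partition: "is_partition2 (dom \<Phi>) N1 N2"
begin

lemma total_preorder_partition:
  "total_preorder (R \<Phi>)" "total_preorder (R (\<Phi> |` N1))" "total_preorder (R (\<Phi> |` N2))"
  using total_preorder_R profile is_profile_restrict[OF profile partition] by blast+

lemma models_fusion_partition:
  "models (B (F \<Phi> E)) = max_set (models (B E)) (R \<Phi>)"
  "models (B (F (\<Phi> |` N1) E)) = max_set (models (B E)) (R (\<Phi> |` N1))"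
  "models (B (F (\<Phi> |` N2) E)) = max_set (models (B E)) (R (\<Phi> |` N2))"
  using models_fusion profile is_profile_restrict[OF profile partition] by blast+

lemma ESF7_partition_iff:
  "(\<forall>E. entails (And (B (F (\<Phi> |` N1) E)) (B (F (\<Phi> |` N2) E))) (B (F \<Phi> E)))
    \<longleftrightarrow> (\<forall>w w'. R (\<Phi> |` N1) w w' \<longrightarrow> R (\<Phi> |` N2) w w' \<longrightarrow> R \<Phi> w w')"
proof -
  have "(\<forall>E. entails (And (B (F (\<Phi> |` N1) E)) (B (F (\<Phi> |` N2) E))) (B (F \<Phi> E)))
      \<longleftrightarrow> (\<forall>S. max_set S (R (\<Phi> |` N1)) \<inter> max_set S (R (\<Phi> |` N2)) \<subseteq> max_set S (R \<Phi>))"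
    using epistemic_space_all_models_iff[OF epistemic_space, of "\<lambda>S. max_set S (R (\<Phi> |` N1)) \<inter> max_set S (R (\<Phi> |` N2))
      \<subseteq> max_set S (R \<Phi>)"]
    by (simp add: entails_def models_fusion_partition)
  then show ?thesis
    using weak_pareto_iff_max_set_Int_subset[OF total_preorder_partition(2,3)] by simp
qed

lemma ESF8_partition_iff:
  "(\<forall>E. consistent (And (B (F (\<Phi> |` N1) E)) (B (F (\<Phi> |` N2) E)))
      \<longrightarrow> entails (B (F \<Phi> E)) (And (B (F (\<Phi> |` N1) E)) (B (F (\<Phi> |` N2) E))))
    \<longleftrightarrow> (\<forall>w w'. R (\<Phi> |` N1) w w' \<longrightarrow> strict (R (\<Phi> |` N2)) w w' \<longrightarrow> strict (R \<Phi>) w w')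
      \<and> (\<forall>w w'. R (\<Phi> |` N2) w w' \<longrightarrow> strict (R (\<Phi> |` N1)) w w' \<longrightarrow> strict (R \<Phi>) w w')"
proof -
  have "(\<forall>E. consistent (And (B (F (\<Phi> |` N1) E)) (B (F (\<Phi> |` N2) E)))
        \<longrightarrow> entails (B (F \<Phi> E)) (And (B (F (\<Phi> |` N1) E)) (B (F (\<Phi> |` N2) E))))
      \<longleftrightarrow> (\<forall>S. max_set S (R (\<Phi> |` N1)) \<inter> max_set S (R (\<Phi> |` N2)) \<noteq> {}
        \<longrightarrow> max_set S (R \<Phi>) \<subseteq> max_set S (R (\<Phi> |` N1)) \<inter> max_set S (R (\<Phi> |` N2)))"
    using epistemic_space_all_models_iff[OF epistemic_space, of "\<lambda>S. max_set S (R (\<Phi> |` N1)) \<inter> max_set S (R (\<Phi> |` N2)) \<noteq> {}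
      \<longrightarrow> max_set S (R \<Phi>) \<subseteq> max_set S (R (\<Phi> |` N1)) \<inter> max_set S (R (\<Phi> |` N2))"]
    by (simp add: consistent_iff_models entails_def models_fusion_partition)
  then show ?thesis
    using strict_pareto_iff_max_set_subset_Int[OF total_preorder_partition(2,3,1)] by simp
qed

lemma ESF8W_partition_iff:
  "(\<forall>E. consistent (And (B (F (\<Phi> |` N1) E)) (B (F (\<Phi> |` N2) E)))
      \<longrightarrow> entails (B (F \<Phi> E)) (Or (B (F (\<Phi> |` N1) E)) (B (F (\<Phi> |` N2) E))))
    \<longleftrightarrow> (\<forall>w w'. strict (R (\<Phi> |` N1)) w w' \<longrightarrow> strict (R (\<Phi> |` N2)) w w' \<longrightarrow> strict (R \<Phi>) w w')"
proof -
  have "(\<forall>E. consistent (And (B (F (\<Phi> |` N1) E)) (B (F (\<Phi> |` N2) E)))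
        \<longrightarrow> entails (B (F \<Phi> E)) (Or (B (F (\<Phi> |` N1) E)) (B (F (\<Phi> |` N2) E))))
      \<longleftrightarrow> (\<forall>S. max_set S (R (\<Phi> |` N1)) \<inter> max_set S (R (\<Phi> |` N2)) \<noteq> {}
        \<longrightarrow> max_set S (R \<Phi>) \<subseteq> max_set S (R (\<Phi> |` N1)) \<union> max_set S (R (\<Phi> |` N2)))"
    using epistemic_space_all_models_iff[OF epistemic_space, of "\<lambda>S. max_set S (R (\<Phi> |` N1)) \<inter> max_set S (R (\<Phi> |` N2)) \<noteq> {}
      \<longrightarrow> max_set S (R \<Phi>) \<subseteq> max_set S (R (\<Phi> |` N1)) \<union> max_set S (R (\<Phi> |` N2))"]
    by (simp add: consistent_iff_models entails_def models_fusion_partition)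
  then show ?thesis
    using strict_pareto'_iff_max_set_subset_Un[OF total_preorder_partition(2,3,1)] by simp
qed

end

lemma ESF7_iff_Prop3: "ESF7 B F \<longleftrightarrow> Prop3 R"
  unfolding ESF7_def Prop3_def using ESF7_partition_iff by blast

lemma ESF8_iff_Prop4: "ESF8 B F \<longleftrightarrow> Prop4 R"
  unfolding ESF8_def Prop4_def using ESF8_partition_iff is_partition2_commute by blast

lemma ESF8W_iff_Prop4': "ESF8W B F \<longleftrightarrow> Prop4' R"
  unfolding ESF8W_def Prop4'_def using ESF8W_partition_iff by blast

end

theorem mainTheorem3:
  fixes B :: "'e \<Rightarrow> ('p::finite) formula"
    and F :: "('a::wellorder, 'e) combination"
    and R :: "('a, 'e, 'p) assignment"
  assumes "epistemic_space B"
    and "ES_basic_fusion B F"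
    and "\<forall>\<Phi>. is_profile \<Phi> \<longrightarrow> total_preorder (R \<Phi>)"
    and "\<forall>\<Phi> E. is_profile \<Phi> \<longrightarrow> models (B (F \<Phi> E)) = max_set (models (B E)) (R \<Phi>)"
  shows "(ESF5 B F \<longleftrightarrow> Prop1 R)
       \<and> (ESF6 B F \<longleftrightarrow> Prop2 B R)
       \<and> (ESF7 B F \<longleftrightarrow> Prop3 R)
       \<and> (ESF8 B F \<longleftrightarrow> Prop4 R)
       \<and> (ESF8W B F \<longleftrightarrow> Prop4' R)"
proof -
  interpret max_set_representation B F R
    using assms(1,3,4) by unfold_locales auto
  show ?thesis
    using ESF5_iff_Prop1 ESF6_iff_Prop2 ESF7_iff_Prop3 ESF8_iff_Prop4 ESF8W_iff_Prop4' by blast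
qed

end
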